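(* Consider a polymer model on a graph $G=(V,E)$ of maximum degree $\Delta$ with $q$ spins, ground-state spins $g$, allowed polymers $\mathcal C(G)$ and weights $w$, satisfying the polymer sampling condition with a constant $C\ge10$. Then for every $u\in V$ and $\Lambda\subseteq V$, the procedure $\mathrm{MS\text{-}polymer}(G,u,\Lambda,g)$ terminates in finite time almost surely and, for every $\gamma$ (either $\emptyset$ or a polymer containing $u$), $$\Pr[\mathrm{MS\text{-}polymer}(G,u,\Lambda,g)\text{ outputs }\gamma]=\Pr_{\Gamma\sim\mu}[\Gamma(u)=\gamma\mid\Gamma\cap\Lambda=\emptyset].$$
   Context: Polymer model: each $v\in V$ has a ground-state spin $g_v\in[q]$. A polymer $\gamma$ is a connected vertex set $S_\gamma$ with an assignment $\sigma^\gamma_x\in[q]\setminus\{g_x\}$ for $x\in S_\gamma$; $|\gamma|=|S_\gamma|$; we identify $\gamma$ with $S_\gamma$ when taking intersections and neighbourhoods. Polymers are compatible if the graph distance between their vertex sets is at least $2$. $\mu$ is the distribution on sets $\Gamma\subseteq\mathcal C(G)$ of pairwise compatible polymers with $\mu(\Gamma)\propto\prod_{\gamma\in\Gamma}w_\gamma$. $\Gamma(u)$ is the polymer of $\Gamma$ containing $u$ if one exists, and $\emptyset$ otherwise; "$\Gamma\cap\Lambda=\emptyset$" means no polymer of $\Gamma$ contains a vertex of $\Lambda$. Polymer sampling condition with constant $C$: there is $\theta\ge C(1+\log((q-1)\Delta))$ with $w_\gamma\le\exp(-\theta|\gamma|)$ for all $\gamma\in\mathcal C(G)$. For $u\in V$,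 $\nu_u$ outputs each polymer $\gamma\in\mathcal C(G)$ containing $u$ with probability $w_\gamma$, and $\emptyset$ with the remaining probability. $N^+(x)=N(x)\cup\{x\}$ and $N^+(\gamma)=\bigcup_{x\in\gamma}N^+(x)$. $\mathrm{MS\text{-}polymer}(G,u,\Lambda,g)$ (with $\Lambda$ a local variable): if $u\in\Lambda$, return $\emptyset$; draw $\gamma\sim\nu_u$; if $\gamma$ contains a vertex of $\Lambda$, return $\emptyset$; for each $v\in N^+(\gamma)$, processing $v=u$ first: let $\gamma'\leftarrow\mathrm{MS\text{-}polymer}(G,v,\Lambda,g)$ with the current $\Lambda$; if $\gamma'\ne\emptyset$, return $\emptyset$; set $\Lambda\leftarrow\Lambda\cup\{v\}$. After the loop, return $\gamma$. *)

theory Defs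
  imports "HOL-Probability.Probability"
begin

text \<open>A polymer is a pair (S, sigma) where S is the vertex set
  and sigma the spin assignment on S (sigma x = 0 outside S, so the representation is unique).\<close>

type_synonym 'v polymer = "'v set \<times> ('v \<Rightarrow> nat)"

definition simple_graph :: "'v set \<Rightarrow> ('v \<Rightarrow> 'v \<Rightarrow> bool) \<Rightarrow> bool" where
  "simple_graph V E \<longleftrightarrow> finite V \<and> (\<forall>x y. E x y \<longrightarrow> x \<in> V \<and> y \<in> V \<and> x \<noteq> y \<and> E y x)"

definition nbhd :: "'v set \<Rightarrow> ('v \<Rightarrow> 'v \<Rightarrow> bool) \<Rightarrow> 'v \<Rightarrow> 'v set" where
  "nbhd V E x = {y \<in> V. E x y}"

definition max_degree :: "'v set \<Rightarrow> ('v \<Rightarrow> 'v \<Rightarrow> bool) \<Rightarrow> nat" where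
  "max_degree V E = Max ((\<lambda>v. card (nbhd V E v)) ` V)"

definition nbhd_plus :: "'v set \<Rightarrow> ('v \<Rightarrow> 'v \<Rightarrow> bool) \<Rightarrow> 'v set \<Rightarrow> 'v set" where
  "nbhd_plus V E S = (\<Union>x\<in>S. insert x (nbhd V E x))"

definition connected_set :: "('v \<Rightarrow> 'v \<Rightarrow> bool) \<Rightarrow> 'v set \<Rightarrow> bool" where
  "connected_set E S \<longleftrightarrow> S \<noteq> {} \<and>
     (\<forall>x\<in>S. \<forall>y\<in>S. (x, y) \<in> (Restr {(a, b). E a b} S)\<^sup>*)"

definition is_polymer :: "'v set \<Rightarrow> ('v \<Rightarrow> 'v \<Rightarrow> bool) \<Rightarrow> nat \<Rightarrow> ('v \<Rightarrow> nat) \<Rightarrow> 'v polymer \<Rightarrow> bool" where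
  "is_polymer V E q g \<gamma> \<longleftrightarrow> fst \<gamma> \<subseteq> V \<and> connected_set E (fst \<gamma>) \<and>
     (\<forall>x\<in>fst \<gamma>. snd \<gamma> x \<in> {1..q} - {g x}) \<and> (\<forall>x. x \<notin> fst \<gamma> \<longrightarrow> snd \<gamma> x = 0)"

text \<open>Compatible: graph distance between the vertex sets is at least 2.\<close>
definition compatible :: "('v \<Rightarrow> 'v \<Rightarrow> bool) \<Rightarrow> 'v polymer \<Rightarrow> 'v polymer \<Rightarrow> bool" where
  "compatible E \<gamma>1 \<gamma>2 \<longleftrightarrow> (\<forall>x\<in>fst \<gamma>1. \<forall>y\<in>fst \<gamma>2. x \<noteq> y \<and> \<not> E x y)"

definition poly_configs :: "('v \<Rightarrow> 'v \<Rightarrow> bool) \<Rightarrow> 'v polymer set \<Rightarrow> 'v polymer set set" where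
  "poly_configs E Cset = {\<Gamma>. \<Gamma> \<subseteq> Cset \<and> (\<forall>\<gamma>1\<in>\<Gamma>. \<forall>\<gamma>2\<in>\<Gamma>. \<gamma>1 \<noteq> \<gamma>2 \<longrightarrow> compatible E \<gamma>1 \<gamma>2)}"

definition poly_weight :: "('v polymer \<Rightarrow> real) \<Rightarrow> 'v polymer set \<Rightarrow> real" where
  "poly_weight w \<Gamma> = (\<Prod>\<gamma>\<in>\<Gamma>. w \<gamma>)"

definition mu_prob :: "('v \<Rightarrow> 'v \<Rightarrow> bool) \<Rightarrow> 'v polymer set \<Rightarrow> ('v polymer \<Rightarrow> real)
     \<Rightarrow> 'v polymer set set \<Rightarrow> real" where
  "mu_prob E Cset w A =
     (\<Sum>\<Gamma>\<in>poly_configs E Cset \<inter> A. poly_weight w \<Gamma>) / (\<Sum>\<Gamma>\<in>poly_configs E Cset. poly_weight w \<Gamma>)"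

definition mu_cond_prob :: "('v \<Rightarrow> 'v \<Rightarrow> bool) \<Rightarrow> 'v polymer set \<Rightarrow> ('v polymer \<Rightarrow> real)
     \<Rightarrow> 'v polymer set set \<Rightarrow> 'v polymer set set \<Rightarrow> real" where
  "mu_cond_prob E Cset w A B = mu_prob E Cset w (A \<inter> B) / mu_prob E Cset w B"

text \<open>Gamma(u): the polymer of Gamma containing u (Some), or the empty polymer (None).\<close>
definition poly_at :: "'v polymer set \<Rightarrow> 'v \<Rightarrow> 'v polymer option" where
  "poly_at \<Gamma> u = (if \<exists>\<gamma>\<in>\<Gamma>. u \<in> fst \<gamma> then Some (THE \<gamma>. \<gamma> \<in> \<Gamma> \<and> u \<in> fst \<gamma>) else None)"

definition avoids :: "'v polymer set \<Rightarrow> 'v set \<Rightarrow> bool" where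
  "avoids \<Gamma> \<Lambda> \<longleftrightarrow> (\<forall>\<gamma>\<in>\<Gamma>. fst \<gamma> \<inter> \<Lambda> = {})"

definition polymer_sampling_condition ::
  "real \<Rightarrow> nat \<Rightarrow> nat \<Rightarrow> 'v polymer set \<Rightarrow> ('v polymer \<Rightarrow> real) \<Rightarrow> bool" where
  "polymer_sampling_condition C q \<Delta> Cset w \<longleftrightarrow>
     (\<exists>\<theta>. \<theta> \<ge> C * (1 + ln (real (q - 1) * real \<Delta>)) \<and>
          (\<forall>\<gamma>\<in>Cset. w \<gamma> \<le> exp (- \<theta> * real (card (fst \<gamma>)))))"

definition nu :: "'v polymer set \<Rightarrow> ('v polymer \<Rightarrow> real) \<Rightarrow> 'v \<Rightarrow> 'v polymer option pmf" where
  "nu Cset w u = embed_pmf (\<lambda>x. case x of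
       None \<Rightarrow> 1 - (\<Sum>\<gamma>\<in>{\<gamma>\<in>Cset. u \<in> fst \<gamma>}. w \<gamma>)
     | Some \<gamma> \<Rightarrow> (if \<gamma> \<in> Cset \<and> u \<in> fst \<gamma> then w \<gamma> else 0))"

text \<open>MS-polymer as a subprobability distribution (least fixed point; missing mass =
  non-termination). Inl (u, Lambda) is a call MS-polymer(G,u,Lambda,g);
  Inr (vs, Lambda, gamma) is the remaining loop over the vertices vs with current Lambda.\<close>
context
  fixes V :: "'v set" and E :: "'v \<Rightarrow> 'v \<Rightarrow> bool" and Cset :: "'v polymer set"
    and w :: "'v polymer \<Rightarrow> real" and ord :: "'v set \<Rightarrow> 'v list"
begin

partial_function (spmf) ms_aux ::
  "('v \<times> 'v set) + ('v list \<times> 'v set \<times> 'v polymer) \<Rightarrow> 'v polymer option spmf" where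
  "ms_aux x = (case x of
     Inl (u, \<Lambda>) \<Rightarrow>
       (if u \<in> \<Lambda> then return_spmf None else
        bind_spmf (spmf_of_pmf (nu Cset w u)) (\<lambda>go. case go of
          None \<Rightarrow> return_spmf None
        | Some \<gamma> \<Rightarrow>
            (if fst \<gamma> \<inter> \<Lambda> \<noteq> {} then return_spmf None
             else ms_aux (Inr (u # ord (nbhd_plus V E (fst \<gamma>) - {u}), \<Lambda>, \<gamma>)))))
   | Inr (vs, \<Lambda>, \<gamma>) \<Rightarrow>
       (case vs of
          [] \<Rightarrow> return_spmf (Some \<gamma>)
        | v # vs' \<Rightarrow>
            bind_spmf (ms_aux (Inl (v, \<Lambda>))) (\<lambda>g'. case g' of
              None \<Rightarrow> ms_aux (Inr (vs', insert v \<Lambda>, \<gamma>))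
            | Some _ \<Rightarrow> return_spmf None)))"

definition ms_polymer :: "'v \<Rightarrow> 'v set \<Rightarrow> 'v polymer option spmf" where
  "ms_polymer u \<Lambda> = ms_aux (Inl (u, \<Lambda>))"

end

end

theory Submission
  imports Defs
begin

text \<open>Let \<open>Z \<Lambda>\<close> be the total weight of the compatible configurations avoiding \<Lambda>. A configuration
  whose polymer at u is \<gamma> consists of \<gamma> and a configuration avoiding \<open>\<Lambda> \<union> N\<^sup>+(\<gamma>)\<close>, so given
  \<open>\<Gamma> \<inter> \<Lambda> = \<emptyset>\<close> the polymer at u is \<gamma> with probability \<open>w \<gamma> Z (\<Lambda> \<union> N\<^sup>+(\<gamma>)) / Z \<Lambda>\<close>.
  MS-polymer proposes \<gamma> with probability \<open>w \<gamma>\<close> and keeps it exactly when its recursive calls at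
  the vertices of \<open>N\<^sup>+(\<gamma>)\<close> all return \<emptyset>, which by induction happens with probability
  \<open>Z (\<Lambda> \<union> N\<^sup>+(\<gamma>)) / Z \<Lambda>\<close> (the ratios telescope). So the claimed laws are a fixed point of the
  recursion, and the sampler, being its least fixed point, lies below them. They coincide because
  the sampler terminates almost surely: if every call diverges with probability at most M, a call
  from a vertex u diverges with probability at most M times the sum of \<open>w \<gamma> (1 + |N\<^sup>+(\<gamma>)|)\<close> over
  the polymers \<gamma> containing u, and this sum is at most 1/2 by the sampling condition and by counting
  connected supports through walks covering them.\<close>

section \<open>Walks and connected sets\<close>

lemma rtrancl_exits:
  assumes "(a, b) \<in> R\<^sup>*" "a \<in> T" "b \<notin> T"
  obtains y x where "(y, x) \<in> R" "y \<in> T" "x \<notin> T"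
  using assms by (induction rule: rtrancl_induct) blast+

lemma geometric_sum_le:
  fixes x :: real
  assumes "0 \<le> x" "x < 1"
  shows "(\<Sum>i<n. x ^ i) \<le> 1 / (1 - x)"
proof -
  have "(\<Sum>i<n. x ^ i) \<le> (\<Sum>i. x ^ i)"
    using assms by (intro sum_le_suminf summable_geometric) auto
  then show ?thesis
    using assms by (simp add: suminf_geometric)
qed

locale graph =
  fixes V :: "'v set" and E :: "'v \<Rightarrow> 'v \<Rightarrow> bool"
  assumes simple: "simple_graph V E"
begin

abbreviation \<Delta> :: nat where "\<Delta> \<equiv> max_degree V E"

lemma finite_V: "finite V"
  using simple by (simp add: simple_graph_def)

lemma edge_sym: "E x y \<Longrightarrow> E y x"
  using simple by (simp add: simple_graph_def)

lemma edge_in_V: "E x y \<Longrightarrow> x \<in> V \<and> y \<in> V"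
  using simple by (simp add: simple_graph_def)

lemma mem_nbhd_iff: "y \<in> nbhd V E x \<longleftrightarrow> E x y"
  using edge_in_V by (auto simp: nbhd_def)

lemma finite_nbhd: "finite (nbhd V E x)"
  using finite_V by (simp add: nbhd_def)

lemma card_nbhd_le: "card (nbhd V E x) \<le> \<Delta>"
proof (cases "x \<in> V")
  case True
  then show ?thesis
    unfolding max_degree_def using finite_V by (intro Max_ge) auto
next
  case False
  then have "nbhd V E x = {}"
    using edge_in_V by (auto simp: nbhd_def)
  then show ?thesis by simp
qed

lemma finite_nbhd_plus: "finite S \<Longrightarrow> finite (nbhd_plus V E S)"
  unfolding nbhd_plus_def using finite_nbhd by auto

lemma subset_nbhd_plus: "S \<subseteq> nbhd_plus V E S"
  by (auto simp: nbhd_plus_def)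

lemma card_nbhd_plus_le:
  assumes "finite S"
  shows "card (nbhd_plus V E S) \<le> (\<Delta> + 1) * card S"
proof -
  have "card (nbhd_plus V E S) \<le> (\<Sum>x\<in>S. card (insert x (nbhd V E x)))"
    unfolding nbhd_plus_def by (rule card_UN_le[OF assms])
  also have "\<dots> \<le> (\<Sum>x\<in>S. \<Delta> + 1)"
    by (intro sum_mono order.trans[OF card_insert_le_m1]) (use card_nbhd_le in auto)
  finally show ?thesis by (simp add: mult.commute)
qed

fun walks :: "nat \<Rightarrow> 'v \<Rightarrow> 'v list set" where
  "walks 0 v = {[v]}"
| "walks (Suc n) v = (\<Union>y\<in>nbhd V E v. (#) v ` walks n y)"

lemma length_walks: "W \<in> walks n v \<Longrightarrow> length W = Suc n"
  by (induction n arbitrary: v W) auto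

lemma walks_disjoint: "i \<noteq> j \<Longrightarrow> walks i v \<inter> walks j v = {}"
  using length_walks by (metis disjoint_iff nat.inject)

lemma finite_walks: "finite (walks n v)"
  by (induction n arbitrary: v) (auto simp: finite_nbhd)

lemma card_walks_le: "card (walks n v) \<le> \<Delta> ^ n"
proof (induction n arbitrary: v)
  case 0
  then show ?case by simp
next
  case (Suc n)
  have "card (walks (Suc n) v) \<le> (\<Sum>y\<in>nbhd V E v. card ((#) v ` walks n y))"
    by (simp add: card_UN_le finite_nbhd)
  also have "\<dots> \<le> (\<Sum>y\<in>nbhd V E v. \<Delta> ^ n)"
    by (intro sum_mono order.trans[OF card_image_le[OF finite_walks] Suc.IH])
  also have "\<dots> \<le> \<Delta> * \<Delta> ^ n"
    using card_nbhd_le by simp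
  finally show ?case by simp
qed

lemma walks_ConsI: "E v y \<Longrightarrow> W \<in> walks n y \<Longrightarrow> v # W \<in> walks (Suc n) v"
  by (auto simp: mem_nbhd_iff)

lemma walks_SucE:
  assumes "W \<in> walks (Suc n) v"
  obtains y W' where "E v y" "W' \<in> walks n y" "W = v # W'"
  using assms by (auto simp: mem_nbhd_iff)

declare walks.simps(2) [simp del]

text \<open>Splice the detour \<open>y, x, y\<close> into the walk at an occurrence of y.\<close>
lemma walk_extend:
  assumes "W \<in> walks n v" "y \<in> set W" "E y x"
  shows "\<exists>W'\<in>walks (Suc (Suc n)) v. set W' = insert x (set W)"
  using assms
proof (induction n arbitrary: v W)
  case 0
  then have "W = [v]" "y = v" by auto
  then have "[v, x, v] \<in> walks (Suc (Suc 0)) v"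
    using 0 edge_sym by (intro walks_ConsI) (auto simp: walks.simps(2) mem_nbhd_iff)
  then show ?case
    using \<open>W = [v]\<close> by (intro bexI[of _ "[v, x, v]"]) auto
next
  case (Suc n)
  then obtain z W1 where z: "E v z" "W1 \<in> walks n z" "W = v # W1"
    by (auto elim: walks_SucE)
  show ?case
  proof (cases "y = v")
    case True
    then have "v # x # W \<in> walks (Suc (Suc (Suc n))) v"
      using Suc.prems edge_sym by (intro walks_ConsI) (auto intro: walks_ConsI)
    then show ?thesis
      using z by (intro bexI[of _ "v # x # W"]) auto
  next
    case False
    then obtain W1' where "W1' \<in> walks (Suc (Suc n)) z" "set W1' = insert x (set W1)"
      using Suc.IH[OF z(2)] Suc.prems False z by auto
    then show ?thesis
      using z by (intro bexI[of _ "v # W1'"] walks_ConsI) auto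
  qed
qed

lemma connected_set_walk:
  assumes S: "connected_set E S" "S \<subseteq> V" "v \<in> S"
  shows "\<exists>n W. W \<in> walks n v \<and> set W = S \<and> n \<le> 2 * (card S - 1)"
proof -
  have finS: "finite S"
    using S finite_V finite_subset by blast
  have "\<exists>n W. W \<in> walks n v \<and> set W = S \<and> n \<le> 2 * (card S - 1)"
    if "T \<subseteq> S" "v \<in> T" "W \<in> walks n v" "set W = T" "n \<le> 2 * (card T - 1)" for T W n
    using that
  proof (induction "card (S - T)" arbitrary: T W n rule: less_induct)
    case less
    show ?case
    proof (cases "T = S")
      case True
      then show ?thesis using less.prems by blast
    next
      case False
      then obtain z where z: "z \<in> S" "z \<notin> T"
        using less.prems(1) by blast
      have path: "(v, z) \<in> (Restr {(a, b). E a b} S)\<^sup>*"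
        using S(1,3) z(1) unfolding connected_set_def by blast
      obtain y x where "(y, x) \<in> Restr {(a, b). E a b} S" "y \<in> T" "x \<notin> T"
        by (rule rtrancl_exits[OF path less.prems(2) z(2)])
      then have yx: "E y x" "x \<in> S" "y \<in> T" "x \<notin> T"
        by auto
      obtain W' where W': "W' \<in> walks (Suc (Suc n)) v" "set W' = insert x T"
        using walk_extend[OF less.prems(3), of y x] less.prems(4) yx by auto
      have finT: "finite T"
        using less.prems(1) finS finite_subset by blast
      have decrease: "card (S - insert x T) < card (S - T)"
        using yx finS by (intro psubset_card_mono) auto
      have "0 < card T"
        using finT less.prems(2) by (auto simp: card_gt_0_iff)
      then have "Suc (Suc n) \<le> 2 * (card (insert x T) - 1)"
        using less.prems(5) yx(4) finT by simp
      then show ?thesis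
        using less.hyps[OF decrease _ _ W'] less.prems yx by auto
    qed
  qed
  from this[of "{v}" "[v]" 0] show ?thesis
    using S by simp
qed

definition connected_sets :: "'v \<Rightarrow> 'v set set" where
  "connected_sets v = {S. S \<subseteq> V \<and> connected_set E S \<and> v \<in> S}"

lemma finite_connected_sets: "finite (connected_sets v)"
  by (rule finite_subset[of _ "Pow V"]) (auto simp: connected_sets_def finite_V)

lemma connected_sets_card_pos: "S \<in> connected_sets v \<Longrightarrow> 0 < card S"
  using finite_V finite_subset by (fastforce simp: connected_sets_def card_gt_0_iff)

lemma sum_walks_weight_le:
  fixes c :: real
  assumes c: "0 \<le> c" "real \<Delta> * c \<le> 1/4"
  shows "(\<Sum>W\<in>(\<Union>n<N. walks n v). c ^ length W) \<le> 4/3 * c"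
proof -
  have "(\<Sum>W\<in>(\<Union>n<N. walks n v). c ^ length W) = (\<Sum>n<N. \<Sum>W\<in>walks n v. c ^ length W)"
    using finite_walks walks_disjoint by (intro sum.UNION_disjoint) auto
  also have "\<dots> = (\<Sum>n<N. real (card (walks n v)) * c ^ Suc n)"
    by (simp add: length_walks)
  also have "\<dots> \<le> (\<Sum>n<N. real \<Delta> ^ n * c ^ Suc n)"
    using c card_walks_le by (intro sum_mono mult_right_mono) (auto simp flip: of_nat_power)
  also have "\<dots> = c * (\<Sum>n<N. (real \<Delta> * c) ^ n)"
    unfolding sum_distrib_left by (intro sum.cong) (auto simp: power_mult_distrib mult_ac)
  also have "\<dots> \<le> c * (1 / (1 - real \<Delta> * c))"
    using c by (intro mult_left_mono geometric_sum_le) auto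
  also have "\<dots> \<le> c * (4/3)"
  proof (rule mult_left_mono)
    show "1 / (1 - real \<Delta> * c) \<le> 4/3"
      using c by (simp add: field_simps)
  qed (rule c(1))
  finally show ?thesis
    by simp
qed

lemma covering_walks:
  obtains walk where "inj_on walk (connected_sets v)"
    "walk ` connected_sets v \<subseteq> (\<Union>n<Suc (2 * card V). walks n v)"
    "\<And>S. S \<in> connected_sets v \<Longrightarrow> Suc (length (walk S)) \<le> 2 * card S"
proof -
  have "\<forall>S\<in>connected_sets v. \<exists>W. \<exists>n. W \<in> walks n v \<and> set W = S \<and> n \<le> 2 * (card S - 1)"
    using connected_set_walk unfolding connected_sets_def by blast
  then obtain walk where walk:
    "\<And>S. S \<in> connected_sets v \<Longrightarrow> \<exists>n. walk S \<in> walks n v \<and> set (walk S) = S \<and> n \<le> 2 * (card S - 1)"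
    by (metis bchoice)
  show thesis
  proof
    show "inj_on walk (connected_sets v)"
      by (metis inj_onI walk)
    show "Suc (length (walk S)) \<le> 2 * card S" if S: "S \<in> connected_sets v" for S
      using walk[OF S] connected_sets_card_pos[OF S] length_walks by fastforce
    show "walk ` connected_sets v \<subseteq> (\<Union>n<Suc (2 * card V). walks n v)"
    proof clarify
      fix S assume S: "S \<in> connected_sets v"
      have "card S \<le> card V"
        using S finite_V by (intro card_mono) (auto simp: connected_sets_def)
      then show "walk S \<in> (\<Union>n<Suc (2 * card V). walks n v)"
        using walk[OF S] by fastforce
    qed
  qed
qed

lemma sum_connected_sets_le:
  fixes c :: real
  assumes c: "0 \<le> c" "c \<le> 1" "real \<Delta> * c \<le> 1/4"
  shows "(\<Sum>S\<in>connected_sets v. (c^2) ^ card S) \<le> 2 * c^2"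
proof -
  obtain walk where inj: "inj_on walk (connected_sets v)"
    and walk_short: "walk ` connected_sets v \<subseteq> (\<Union>n<Suc (2 * card V). walks n v)"
    and walk_length: "\<And>S. S \<in> connected_sets v \<Longrightarrow> Suc (length (walk S)) \<le> 2 * card S"
    using covering_walks[of v] by blast
  have "(\<Sum>S\<in>connected_sets v. (c^2) ^ card S) \<le> (\<Sum>S\<in>connected_sets v. c * c ^ length (walk S))"
  proof (rule sum_mono)
    fix S assume "S \<in> connected_sets v"
    then have "c ^ (2 * card S) \<le> c ^ Suc (length (walk S))"
      using c walk_length by (intro power_decreasing) auto
    then show "(c^2) ^ card S \<le> c * c ^ length (walk S)"
      by (simp flip: power_mult)
  qed
  also have "\<dots> = c * (\<Sum>W\<in>walk ` connected_sets v. c ^ length W)"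
    by (simp add: sum_distrib_left sum.reindex[OF inj])
  also have "\<dots> \<le> c * (\<Sum>W\<in>(\<Union>n<Suc (2 * card V). walks n v). c ^ length W)"
    using c walk_short finite_walks by (intro mult_left_mono sum_mono2) auto
  also have "\<dots> \<le> c * (4/3 * c)"
    using c sum_walks_weight_le by (intro mult_left_mono) auto
  also have "\<dots> \<le> 2 * c^2"
    using zero_le_power2[of c] by (simp add: power2_eq_square)
  finally show ?thesis .
qed

end

section \<open>The polymer measure\<close>

locale polymer_model = graph V E
  for V :: "'v set" and E :: "'v \<Rightarrow> 'v \<Rightarrow> bool" +
  fixes q :: nat and g :: "'v \<Rightarrow> nat" and Cset :: "'v polymer set" and w :: "'v polymer \<Rightarrow> real"
  assumes polymers: "\<forall>\<gamma>\<in>Cset. is_polymer V E q g \<gamma>"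
    and ground_spin: "\<forall>v\<in>V. g v \<in> {1..q}"
    and w_nonneg: "\<forall>\<gamma>\<in>Cset. 0 \<le> w \<gamma>"
begin

lemma polymerD:
  assumes "\<gamma> \<in> Cset"
  shows "fst \<gamma> \<subseteq> V" "connected_set E (fst \<gamma>)"
    "\<forall>x\<in>fst \<gamma>. snd \<gamma> x \<in> {1..q} - {g x}" "\<forall>x. x \<notin> fst \<gamma> \<longrightarrow> snd \<gamma> x = 0"
  using assms polymers by (simp_all add: is_polymer_def)

lemma finite_polymer: "\<gamma> \<in> Cset \<Longrightarrow> finite (fst \<gamma>)"
  using polymerD(1) finite_V finite_subset by blast

lemma polymer_nonempty: "\<gamma> \<in> Cset \<Longrightarrow> fst \<gamma> \<noteq> {}"
  using polymerD(2) by (simp add: connected_set_def)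

definition spin_assignments :: "'v set \<Rightarrow> ('v \<Rightarrow> nat) set" where
  "spin_assignments S = (\<lambda>f x. if x \<in> S then f x else 0) ` (\<Pi>\<^sub>E x\<in>S. {1..q} - {g x})"

lemma spin_assignments_polymer:
  assumes "\<gamma> \<in> Cset"
  shows "snd \<gamma> \<in> spin_assignments (fst \<gamma>)"
  unfolding spin_assignments_def
proof (rule image_eqI)
  show "snd \<gamma> = (\<lambda>x. if x \<in> fst \<gamma> then restrict (snd \<gamma>) (fst \<gamma>) x else 0)"
    using polymerD(4)[OF assms] by auto
  show "restrict (snd \<gamma>) (fst \<gamma>) \<in> (\<Pi>\<^sub>E x\<in>fst \<gamma>. {1..q} - {g x})"
    using polymerD(3)[OF assms] by (simp only: restrict_PiE_iff)
qed

lemma finite_spin_assignments: "finite S \<Longrightarrow> finite (spin_assignments S)"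
  by (simp add: spin_assignments_def finite_PiE)

lemma card_spin_assignments_le:
  assumes "finite S" "S \<subseteq> V"
  shows "card (spin_assignments S) \<le> (q - 1) ^ card S"
proof -
  have "card (spin_assignments S) \<le> card (\<Pi>\<^sub>E x\<in>S. {1..q} - {g x})"
    unfolding spin_assignments_def by (rule card_image_le) (simp add: assms finite_PiE)
  also have "\<dots> = (\<Prod>x\<in>S. q - 1)"
    using assms ground_spin by (simp add: card_PiE card_Diff_singleton subset_iff)
  finally show ?thesis by simp
qed

lemma finite_Cset: "finite Cset"
proof (rule finite_subset)
  show "Cset \<subseteq> Sigma (Pow V) spin_assignments"
    using polymerD(1) spin_assignments_polymer by fastforce
  show "finite (Sigma (Pow V) spin_assignments)"
    using finite_V by (auto intro!: finite_SigmaI finite_spin_assignments intro: finite_subset)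
qed

definition polymers_at :: "'v \<Rightarrow> 'v polymer set" where
  "polymers_at v = {\<gamma>\<in>Cset. v \<in> fst \<gamma>}"

lemma finite_polymers_at: "finite (polymers_at v)"
  using finite_Cset by (simp add: polymers_at_def)

lemma polymers_at_subset: "polymers_at v \<subseteq> Sigma (connected_sets v) spin_assignments"
proof
  fix \<gamma> assume "\<gamma> \<in> polymers_at v"
  then have "\<gamma> \<in> Cset" "v \<in> fst \<gamma>"
    by (auto simp: polymers_at_def)
  then show "\<gamma> \<in> Sigma (connected_sets v) spin_assignments"
    using polymerD(1,2) spin_assignments_polymer by (cases \<gamma>) (fastforce simp: connected_sets_def)
qed

lemma compatible_sym: "compatible E \<gamma> \<delta> \<longleftrightarrow> compatible E \<delta> \<gamma>"
  using edge_sym unfolding compatible_def by blast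

lemma compatible_iff_disjoint_nbhd_plus:
  "fst \<gamma> \<subseteq> V \<Longrightarrow> compatible E \<delta> \<gamma> \<longleftrightarrow> fst \<gamma> \<inter> nbhd_plus V E (fst \<delta>) = {}"
  unfolding compatible_def nbhd_plus_def nbhd_def by blast

abbreviation configs :: "'v polymer set set" where
  "configs \<equiv> poly_configs E Cset"

lemma finite_configs: "finite configs"
  by (rule finite_subset[of _ "Pow Cset"]) (auto simp: poly_configs_def finite_Cset)

lemma configs_subset: "\<Gamma> \<in> configs \<Longrightarrow> \<Gamma> \<subseteq> Cset"
  by (simp add: poly_configs_def)

lemma poly_weight_nonneg: "\<Gamma> \<in> configs \<Longrightarrow> 0 \<le> poly_weight w \<Gamma>"
  unfolding poly_weight_def using configs_subset w_nonneg by (intro prod_nonneg) auto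

definition Z :: "'v set \<Rightarrow> real" where
  "Z \<Lambda> = (\<Sum>\<Gamma>\<in>{\<Gamma>\<in>configs. avoids \<Gamma> \<Lambda>}. poly_weight w \<Gamma>)"

lemma Z_ge_1: "1 \<le> Z \<Lambda>"
proof -
  have "{} \<in> {\<Gamma>\<in>configs. avoids \<Gamma> \<Lambda>}"
    by (simp add: poly_configs_def avoids_def)
  then have "poly_weight w {} \<le> Z \<Lambda>"
    unfolding Z_def using finite_configs poly_weight_nonneg by (intro member_le_sum) auto
  then show ?thesis
    by (simp add: poly_weight_def)
qed

lemma Z_pos: "0 < Z \<Lambda>"
  using Z_ge_1[of \<Lambda>] by simp

lemma Z_antimono: "\<Lambda> \<subseteq> \<Lambda>' \<Longrightarrow> Z \<Lambda>' \<le> Z \<Lambda>"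
  unfolding Z_def using finite_configs poly_weight_nonneg by (intro sum_mono2) (auto simp: avoids_def)

lemma Z_ratio_le_1: "Z (\<Lambda> \<union> A) / Z \<Lambda> \<le> 1"
  using Z_pos[of \<Lambda>] Z_antimono[of \<Lambda> "\<Lambda> \<union> A"] by simp

lemma Z_ratio_nonneg: "0 \<le> Z \<Lambda>' / Z \<Lambda>"
  using Z_pos[of \<Lambda>] Z_pos[of \<Lambda>'] by simp

definition mu_avoiding :: "'v set \<Rightarrow> 'v polymer set pmf" where
  "mu_avoiding \<Lambda> =
     embed_pmf (\<lambda>\<Gamma>. if \<Gamma> \<in> configs \<and> avoids \<Gamma> \<Lambda> then poly_weight w \<Gamma> / Z \<Lambda> else 0)"

lemma pmf_mu_avoiding:
  "pmf (mu_avoiding \<Lambda>) \<Gamma> = (if \<Gamma> \<in> configs \<and> avoids \<Gamma> \<Lambda> then poly_weight w \<Gamma> / Z \<Lambda> else 0)"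
  unfolding mu_avoiding_def
proof (rule pmf_embed_pmf)
  let ?A = "{\<Gamma>\<in>configs. avoids \<Gamma> \<Lambda>}"
  show "0 \<le> (if \<Gamma> \<in> configs \<and> avoids \<Gamma> \<Lambda> then poly_weight w \<Gamma> / Z \<Lambda> else 0)" for \<Gamma>
    using poly_weight_nonneg Z_pos[of \<Lambda>] by auto
  have "(\<integral>\<^sup>+\<Gamma>. ennreal (if \<Gamma> \<in> configs \<and> avoids \<Gamma> \<Lambda> then poly_weight w \<Gamma> / Z \<Lambda> else 0) \<partial>count_space UNIV)
      = (\<Sum>\<Gamma>\<in>?A. ennreal (if \<Gamma> \<in> configs \<and> avoids \<Gamma> \<Lambda> then poly_weight w \<Gamma> / Z \<Lambda> else 0))"
    using finite_configs by (intro nn_integral_count_space') auto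
  also have "\<dots> = (\<Sum>\<Gamma>\<in>?A. ennreal (poly_weight w \<Gamma> / Z \<Lambda>))"
    by (intro sum.cong) auto
  also have "\<dots> = ennreal (\<Sum>\<Gamma>\<in>?A. poly_weight w \<Gamma> / Z \<Lambda>)"
    using poly_weight_nonneg Z_pos[of \<Lambda>] by (subst sum_ennreal) auto
  also have "(\<Sum>\<Gamma>\<in>?A. poly_weight w \<Gamma> / Z \<Lambda>) = 1"
    using Z_pos[of \<Lambda>] by (simp add: Z_def flip: sum_divide_distrib)
  finally show "(\<integral>\<^sup>+\<Gamma>. ennreal (if \<Gamma> \<in> configs \<and> avoids \<Gamma> \<Lambda> then poly_weight w \<Gamma> / Z \<Lambda> else 0)
      \<partial>count_space UNIV) = 1"
    by simp
qed

lemma set_pmf_mu_avoiding: "set_pmf (mu_avoiding \<Lambda>) \<subseteq> {\<Gamma>\<in>configs. avoids \<Gamma> \<Lambda>}"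
  by (auto simp: set_pmf_iff pmf_mu_avoiding split: if_splits)

lemma measure_mu_avoiding:
  "measure_pmf.prob (mu_avoiding \<Lambda>) A = (\<Sum>\<Gamma>\<in>{\<Gamma>\<in>configs. avoids \<Gamma> \<Lambda> \<and> \<Gamma> \<in> A}. poly_weight w \<Gamma>) / Z \<Lambda>"
proof -
  let ?B = "{\<Gamma>\<in>configs. avoids \<Gamma> \<Lambda> \<and> \<Gamma> \<in> A}"
  have "measure_pmf.prob (mu_avoiding \<Lambda>) A = measure_pmf.prob (mu_avoiding \<Lambda>) ?B"
    using set_pmf_mu_avoiding by (intro measure_pmf.finite_measure_eq_AE AE_pmfI) auto
  also have "\<dots> = (\<Sum>\<Gamma>\<in>?B. pmf (mu_avoiding \<Lambda>) \<Gamma>)"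
    using finite_configs by (intro measure_measure_pmf_finite) auto
  also have "\<dots> = (\<Sum>\<Gamma>\<in>?B. poly_weight w \<Gamma> / Z \<Lambda>)"
    by (intro sum.cong) (auto simp: pmf_mu_avoiding)
  finally show ?thesis
    by (simp add: sum_divide_distrib)
qed

lemma configs_disjoint:
  assumes "\<Gamma> \<in> configs" "\<gamma> \<in> \<Gamma>" "\<gamma>' \<in> \<Gamma>" "x \<in> fst \<gamma>" "x \<in> fst \<gamma>'"
  shows "\<gamma> = \<gamma>'"
  using assms unfolding poly_configs_def compatible_def by blast

lemma poly_at_eq_Some:
  assumes "\<Gamma> \<in> configs"
  shows "poly_at \<Gamma> u = Some \<gamma> \<longleftrightarrow> \<gamma> \<in> \<Gamma> \<and> u \<in> fst \<gamma>"
proof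
  assume "\<gamma> \<in> \<Gamma> \<and> u \<in> fst \<gamma>"
  moreover from this have "(THE \<gamma>'. \<gamma>' \<in> \<Gamma> \<and> u \<in> fst \<gamma>') = \<gamma>"
    using configs_disjoint[OF assms] by blast
  ultimately show "poly_at \<Gamma> u = Some \<gamma>"
    unfolding poly_at_def by auto
next
  assume "poly_at \<Gamma> u = Some \<gamma>"
  then obtain \<gamma>' where "\<gamma>' \<in> \<Gamma>" "u \<in> fst \<gamma>'" "\<gamma> = (THE \<gamma>'. \<gamma>' \<in> \<Gamma> \<and> u \<in> fst \<gamma>')"
    unfolding poly_at_def by (auto split: if_splits)
  moreover from this have "(THE \<gamma>'. \<gamma>' \<in> \<Gamma> \<and> u \<in> fst \<gamma>') = \<gamma>'"
    using configs_disjoint[OF assms] by blast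
  ultimately show "\<gamma> \<in> \<Gamma> \<and> u \<in> fst \<gamma>"
    by simp
qed

lemma poly_at_eq_None: "poly_at \<Gamma> u = None \<longleftrightarrow> (\<forall>\<gamma>\<in>\<Gamma>. u \<notin> fst \<gamma>)"
  by (simp add: poly_at_def)

lemma sum_weight_poly_at_None:
  "(\<Sum>\<Gamma>\<in>{\<Gamma>\<in>configs. avoids \<Gamma> \<Lambda> \<and> poly_at \<Gamma> u = None}. poly_weight w \<Gamma>) = Z (insert u \<Lambda>)"
proof -
  have "{\<Gamma>\<in>configs. avoids \<Gamma> \<Lambda> \<and> poly_at \<Gamma> u = None} = {\<Gamma>\<in>configs. avoids \<Gamma> (insert u \<Lambda>)}"
    by (auto simp: avoids_def poly_at_eq_None)
  then show ?thesis
    by (simp add: Z_def)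
qed

lemma avoids_nbhd_plus_remove:
  assumes "\<Gamma> \<in> configs" "\<delta> \<in> \<Gamma>"
  shows "avoids (\<Gamma> - {\<delta>}) (nbhd_plus V E (fst \<delta>))"
  unfolding avoids_def
proof
  fix \<gamma> assume \<gamma>: "\<gamma> \<in> \<Gamma> - {\<delta>}"
  then have "compatible E \<delta> \<gamma>"
    using assms by (auto simp: poly_configs_def)
  moreover have "fst \<gamma> \<subseteq> V"
    using polymerD(1) configs_subset[OF assms(1)] \<gamma> by blast
  ultimately show "fst \<gamma> \<inter> nbhd_plus V E (fst \<delta>) = {}"
    by (simp add: compatible_iff_disjoint_nbhd_plus)
qed

lemma insert_configs:
  assumes "\<Gamma> \<in> configs" "\<delta> \<in> Cset" "avoids \<Gamma> (nbhd_plus V E (fst \<delta>))"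
  shows "insert \<delta> \<Gamma> \<in> configs"
proof -
  have "compatible E \<delta> \<gamma>" if "\<gamma> \<in> \<Gamma>" for \<gamma>
  proof -
    have "fst \<gamma> \<subseteq> V"
      using polymerD(1) configs_subset[OF assms(1)] that by blast
    moreover have "fst \<gamma> \<inter> nbhd_plus V E (fst \<delta>) = {}"
      using assms(3) that by (auto simp: avoids_def)
    ultimately show ?thesis
      by (simp add: compatible_iff_disjoint_nbhd_plus)
  qed
  then show ?thesis
    using assms(1,2) compatible_sym by (auto simp: poly_configs_def)
qed

lemma configs_poly_at_eq_Some:
  assumes \<delta>: "\<delta> \<in> Cset" "u \<in> fst \<delta>" "fst \<delta> \<inter> \<Lambda> = {}"
  shows "{\<Gamma>\<in>configs. avoids \<Gamma> \<Lambda> \<and> poly_at \<Gamma> u = Some \<delta>} =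
    insert \<delta> ` {\<Gamma>\<in>configs. avoids \<Gamma> (\<Lambda> \<union> nbhd_plus V E (fst \<delta>))}"
    (is "?L = insert \<delta> ` ?R")
proof
  show "?L \<subseteq> insert \<delta> ` ?R"
  proof
    fix \<Gamma> assume "\<Gamma> \<in> ?L"
    then have \<Gamma>: "\<Gamma> \<in> configs" "avoids \<Gamma> \<Lambda>" "\<delta> \<in> \<Gamma>"
      using poly_at_eq_Some[of \<Gamma> u \<delta>] by simp_all
    then have "\<Gamma> - {\<delta>} \<in> ?R"
      using avoids_nbhd_plus_remove[OF \<Gamma>(1,3)]
      by (auto simp: poly_configs_def avoids_def)
    then show "\<Gamma> \<in> insert \<delta> ` ?R"
      using \<Gamma>(3) by (intro image_eqI[of _ _ "\<Gamma> - {\<delta>}"]) auto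
  qed
next
  show "insert \<delta> ` ?R \<subseteq> ?L"
  proof
    fix \<Gamma>' assume "\<Gamma>' \<in> insert \<delta> ` ?R"
    then obtain \<Gamma> where \<Gamma>: "\<Gamma> \<in> configs" "avoids \<Gamma> (\<Lambda> \<union> nbhd_plus V E (fst \<delta>))"
      and \<Gamma>': "\<Gamma>' = insert \<delta> \<Gamma>"
      by blast
    then have "insert \<delta> \<Gamma> \<in> configs"
      using \<delta>(1) by (intro insert_configs) (auto simp: avoids_def)
    moreover have "avoids (insert \<delta> \<Gamma>) \<Lambda>"
      using \<Gamma>(2) \<delta>(3) by (auto simp: avoids_def)
    ultimately show "\<Gamma>' \<in> ?L"
      using \<delta>(2) \<Gamma>' by (simp add: poly_at_eq_Some)
  qed
qed

lemma poly_at_SomeD: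
  assumes "\<Gamma> \<in> configs" "avoids \<Gamma> \<Lambda>" "poly_at \<Gamma> u = Some \<delta>"
  shows "\<delta> \<in> Cset" "u \<in> fst \<delta>" "fst \<delta> \<inter> \<Lambda> = {}"
  using assms configs_subset poly_at_eq_Some[OF assms(1)] by (auto simp: avoids_def)

lemma sum_weight_poly_at_Some:
  assumes \<delta>: "\<delta> \<in> Cset" "u \<in> fst \<delta>" "fst \<delta> \<inter> \<Lambda> = {}"
  shows "(\<Sum>\<Gamma>\<in>{\<Gamma>\<in>configs. avoids \<Gamma> \<Lambda> \<and> poly_at \<Gamma> u = Some \<delta>}. poly_weight w \<Gamma>) =
    w \<delta> * Z (\<Lambda> \<union> nbhd_plus V E (fst \<delta>))"
proof -
  let ?R = "{\<Gamma>\<in>configs. avoids \<Gamma> (\<Lambda> \<union> nbhd_plus V E (fst \<delta>))}"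
  have \<delta>_notin: "\<delta> \<notin> \<Gamma>" if "\<Gamma> \<in> ?R" for \<Gamma>
  proof
    assume "\<delta> \<in> \<Gamma>"
    then have "fst \<delta> \<inter> nbhd_plus V E (fst \<delta>) = {}"
      using that by (auto simp: avoids_def)
    moreover have "fst \<delta> \<subseteq> nbhd_plus V E (fst \<delta>)" "fst \<delta> \<noteq> {}"
      using subset_nbhd_plus polymer_nonempty \<delta> by auto
    ultimately show False
      by blast
  qed
  have "inj_on (insert \<delta>) ?R"
  proof (rule inj_onI)
    fix \<Gamma> \<Gamma>' assume "\<Gamma> \<in> ?R" "\<Gamma>' \<in> ?R" "insert \<delta> \<Gamma> = insert \<delta> \<Gamma>'"
    then show "\<Gamma> = \<Gamma>'"
      using \<delta>_notin by (simp add: insert_ident)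
  qed
  then have "(\<Sum>\<Gamma>\<in>{\<Gamma>\<in>configs. avoids \<Gamma> \<Lambda> \<and> poly_at \<Gamma> u = Some \<delta>}. poly_weight w \<Gamma>)
      = (\<Sum>\<Gamma>\<in>?R. poly_weight w (insert \<delta> \<Gamma>))"
    using \<delta> by (simp add: configs_poly_at_eq_Some sum.reindex)
  also have "\<dots> = (\<Sum>\<Gamma>\<in>?R. w \<delta> * poly_weight w \<Gamma>)"
  proof (intro sum.cong refl)
    fix \<Gamma> assume "\<Gamma> \<in> ?R"
    moreover from this have "finite \<Gamma>"
      using configs_subset finite_Cset finite_subset by blast
    ultimately show "poly_weight w (insert \<delta> \<Gamma>) = w \<delta> * poly_weight w \<Gamma>"
      using \<delta>_notin by (simp add: poly_weight_def)
  qed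
  finally show ?thesis
    by (simp add: Z_def sum_distrib_left)
qed

lemma pmf_poly_at_Some:
  "pmf (map_pmf (\<lambda>\<Gamma>. poly_at \<Gamma> u) (mu_avoiding \<Lambda>)) (Some \<delta>) =
    (if \<delta> \<in> Cset \<and> u \<in> fst \<delta> \<and> fst \<delta> \<inter> \<Lambda> = {}
     then w \<delta> * Z (\<Lambda> \<union> nbhd_plus V E (fst \<delta>)) / Z \<Lambda> else 0)"
proof (cases "\<delta> \<in> Cset \<and> u \<in> fst \<delta> \<and> fst \<delta> \<inter> \<Lambda> = {}")
  case True
  then show ?thesis
    by (simp add: pmf_map vimage_def measure_mu_avoiding sum_weight_poly_at_Some)
next
  case False
  then have "{\<Gamma>\<in>configs. avoids \<Gamma> \<Lambda> \<and> poly_at \<Gamma> u = Some \<delta>} = {}"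
    using poly_at_SomeD by blast
  moreover have "pmf (map_pmf (\<lambda>\<Gamma>. poly_at \<Gamma> u) (mu_avoiding \<Lambda>)) (Some \<delta>) =
      (\<Sum>\<Gamma>\<in>{\<Gamma>\<in>configs. avoids \<Gamma> \<Lambda> \<and> poly_at \<Gamma> u = Some \<delta>}. poly_weight w \<Gamma>) / Z \<Lambda>"
    by (simp add: pmf_map vimage_def measure_mu_avoiding)
  ultimately show ?thesis
    using False by (simp only: sum.empty if_False div_0)
qed

lemma pmf_poly_at_None:
  "pmf (map_pmf (\<lambda>\<Gamma>. poly_at \<Gamma> u) (mu_avoiding \<Lambda>)) None = Z (insert u \<Lambda>) / Z \<Lambda>"
  by (simp add: pmf_map vimage_def measure_mu_avoiding sum_weight_poly_at_None)

lemma measure_mu_avoiding_eq_mu_cond_prob: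
  "measure_pmf.prob (mu_avoiding \<Lambda>) A = mu_cond_prob E Cset w A {\<Gamma>. avoids \<Gamma> \<Lambda>}"
proof -
  have "configs \<inter> (A \<inter> {\<Gamma>. avoids \<Gamma> \<Lambda>}) = {\<Gamma>\<in>configs. avoids \<Gamma> \<Lambda> \<and> \<Gamma> \<in> A}"
    "configs \<inter> {\<Gamma>. avoids \<Gamma> \<Lambda>} = {\<Gamma>\<in>configs. avoids \<Gamma> \<Lambda>}"
    "configs = {\<Gamma>\<in>configs. avoids \<Gamma> {}}"
    by (auto simp: avoids_def)
  then show ?thesis
    using Z_pos[of "{}"] by (simp add: mu_cond_prob_def mu_prob_def measure_mu_avoiding Z_def)
qed

end

section \<open>The cluster bound\<close>

locale polymer_sampling = polymer_model V E q g Cset w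
  for V :: "'v set" and E :: "'v \<Rightarrow> 'v \<Rightarrow> bool" and q g Cset w +
  fixes \<theta> :: real
  assumes degree_pos: "1 \<le> \<Delta>" and two_le_q: "2 \<le> q"
    and w_le: "\<forall>\<gamma>\<in>Cset. w \<gamma> \<le> exp (- \<theta> * real (card (fst \<gamma>)))"
    and exp_theta: "32 * real (q - 1) * real \<Delta> ^ 2 \<le> exp \<theta>"
begin

lemma polymer_term_le:
  assumes "\<gamma> \<in> Cset"
  shows "w \<gamma> * (1 + real (card (nbhd_plus V E (fst \<gamma>))))
    \<le> exp (- \<theta>) ^ card (fst \<gamma>) * (1 + (real \<Delta> + 1) * real (card (fst \<gamma>)))"
proof (rule mult_mono)
  show "w \<gamma> \<le> exp (- \<theta>) ^ card (fst \<gamma>)"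
    using w_le assms by (simp add: mult.commute flip: exp_of_nat_mult)
  show "1 + real (card (nbhd_plus V E (fst \<gamma>))) \<le> 1 + (real \<Delta> + 1) * real (card (fst \<gamma>))"
    using of_nat_mono[OF card_nbhd_plus_le[OF finite_polymer[OF assms]], where 'a=real]
    by (simp add: algebra_simps)
qed auto

lemma support_term_le:
  assumes k: "1 \<le> k"
  shows "real (q - 1) ^ k * (exp (- \<theta>) ^ k * (1 + (real \<Delta> + 1) * real k))
    \<le> 3 * real \<Delta> * ((1 / (4 * real \<Delta>))^2) ^ k"
proof -
  have \<Delta>: "1 \<le> real \<Delta>"
    using degree_pos by simp
  have q: "1 \<le> real (q - 1)"
    using two_le_q by simp
  have k': "1 \<le> real k"
    using k by simp
  have "1 + (real \<Delta> + 1) * real k = 1 + real \<Delta> * real k + real k"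
    by (simp add: ring_distribs)
  also have "\<dots> \<le> 3 * real \<Delta> * real k"
    using mult_mono[OF \<Delta> k'] mult_right_mono[OF \<Delta>, of "real k"] by (simp add: mult.commute)
  also have "\<dots> \<le> 3 * real \<Delta> * 2 ^ k"
    using \<Delta> of_nat_less_two_power[of k] by (intro mult_left_mono) auto
  finally have size_factor: "1 + (real \<Delta> + 1) * real k \<le> 3 * real \<Delta> * 2 ^ k" .
  have "2 * real (q - 1) * exp (- \<theta>) = 2 * real (q - 1) / exp \<theta>"
    by (simp add: exp_minus field_simps)
  also have "\<dots> \<le> 2 * real (q - 1) / (32 * real (q - 1) * real \<Delta> ^ 2)"
    using exp_theta q \<Delta> by (intro divide_left_mono) auto
  also have "\<dots> = (1 / (4 * real \<Delta>))^2"
    using q \<Delta> by (simp add: field_simps power2_eq_square)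
  finally have base: "2 * real (q - 1) * exp (- \<theta>) \<le> (1 / (4 * real \<Delta>))^2" .
  have "real (q - 1) ^ k * (exp (- \<theta>) ^ k * (1 + (real \<Delta> + 1) * real k))
      = (real (q - 1) * exp (- \<theta>)) ^ k * (1 + (real \<Delta> + 1) * real k)"
    by (simp add: power_mult_distrib)
  also have "\<dots> \<le> (real (q - 1) * exp (- \<theta>)) ^ k * (3 * real \<Delta> * 2 ^ k)"
    using size_factor by (intro mult_left_mono) auto
  also have "\<dots> = 3 * real \<Delta> * (2 * real (q - 1) * exp (- \<theta>)) ^ k"
    by (simp add: power_mult_distrib)
  also have "\<dots> \<le> 3 * real \<Delta> * ((1 / (4 * real \<Delta>))^2) ^ k"
    using base by (intro mult_left_mono power_mono) auto
  finally show ?thesis .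
qed

lemma sum_polymers_at_weight_nbhd_plus_le:
  "(\<Sum>\<gamma>\<in>polymers_at v. w \<gamma> * (1 + real (card (nbhd_plus V E (fst \<gamma>))))) \<le> 1/2"
proof -
  define c :: real where "c = 1 / (4 * real \<Delta>)"
  define h :: "nat \<Rightarrow> real" where "h k = exp (- \<theta>) ^ k * (1 + (real \<Delta> + 1) * real k)" for k
  have \<Delta>: "1 \<le> real \<Delta>"
    using degree_pos by simp
  have c: "0 \<le> c" "c \<le> 1" "real \<Delta> * c \<le> 1/4"
    using \<Delta> by (auto simp: c_def field_simps)
  have h_nonneg: "0 \<le> h k" for k
    by (simp add: h_def)
  have "(\<Sum>\<gamma>\<in>polymers_at v. w \<gamma> * (1 + real (card (nbhd_plus V E (fst \<gamma>)))))
      \<le> (\<Sum>\<gamma>\<in>polymers_at v. h (card (fst \<gamma>)))"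
    unfolding h_def using polymer_term_le by (intro sum_mono) (simp add: polymers_at_def)
  also have "\<dots> \<le> (\<Sum>\<gamma>\<in>Sigma (connected_sets v) spin_assignments. h (card (fst \<gamma>)))"
    using polymers_at_subset finite_connected_sets h_nonneg
    by (intro sum_mono2 finite_SigmaI finite_spin_assignments)
       (auto simp: connected_sets_def intro: finite_subset[OF _ finite_V])
  also have "\<dots> = (\<Sum>S\<in>connected_sets v. real (card (spin_assignments S)) * h (card S))"
    using finite_connected_sets sum.Sigma[of "connected_sets v" spin_assignments "\<lambda>S \<sigma>. h (card S)"]
    by (simp add: split_def connected_sets_def finite_spin_assignments finite_subset[OF _ finite_V])
  also have "\<dots> \<le> (\<Sum>S\<in>connected_sets v. real (q - 1) ^ card S * h (card S))"
    using card_spin_assignments_le finite_V h_nonneg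
    by (intro sum_mono mult_right_mono)
       (auto simp: connected_sets_def intro: finite_subset simp flip: of_nat_power)
  also have "\<dots> \<le> (\<Sum>S\<in>connected_sets v. 3 * real \<Delta> * (c^2) ^ card S)"
    unfolding h_def c_def using connected_sets_card_pos
    by (intro sum_mono support_term_le) (simp add: Suc_le_eq)
  also have "\<dots> \<le> 3 * real \<Delta> * (2 * c^2)"
    using sum_connected_sets_le[OF c] \<Delta> by (simp add: sum_distrib_left[symmetric])
  also have "\<dots> \<le> 1/2"
    using \<Delta> by (simp add: c_def field_simps power2_eq_square)
  finally show ?thesis .
qed

lemma sum_polymers_at_weight_le: "(\<Sum>\<gamma>\<in>polymers_at v. w \<gamma>) \<le> 1/2"
proof -
  have "(\<Sum>\<gamma>\<in>polymers_at v. w \<gamma>) \<le> (\<Sum>\<gamma>\<in>polymers_at v. w \<gamma> * (1 + real (card (nbhd_plus V E (fst \<gamma>)))))"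
    using w_nonneg by (intro sum_mono) (force simp: polymers_at_def mult_le_cancel_left1)
  also have "\<dots> \<le> 1/2"
    by (rule sum_polymers_at_weight_nbhd_plus_le)
  finally show ?thesis .
qed

lemma pmf_nu:
  "pmf (nu Cset w u) x = (case x of None \<Rightarrow> 1 - (\<Sum>\<gamma>\<in>polymers_at u. w \<gamma>)
     | Some \<gamma> \<Rightarrow> if \<gamma> \<in> polymers_at u then w \<gamma> else 0)"
proof -
  define f where "f = (\<lambda>x. case x of None \<Rightarrow> 1 - (\<Sum>\<gamma>\<in>polymers_at u. w \<gamma>)
     | Some \<gamma> \<Rightarrow> if \<gamma> \<in> polymers_at u then w \<gamma> else 0)"
  have nu: "nu Cset w u = embed_pmf f"
    unfolding nu_def f_def polymers_at_def by simp
  have f_nonneg: "0 \<le> f x" for x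
    using sum_polymers_at_weight_le[of u] w_nonneg
    by (auto simp: f_def polymers_at_def split: option.split)
  have "(\<integral>\<^sup>+x. ennreal (f x) \<partial>count_space UNIV) = (\<Sum>x\<in>insert None (Some ` polymers_at u). ennreal (f x))"
    by (intro nn_integral_count_space') (auto simp: f_def finite_polymers_at split: option.split)
  also have "\<dots> = ennreal (f None + (\<Sum>\<gamma>\<in>polymers_at u. f (Some \<gamma>)))"
    using f_nonneg finite_polymers_at by (simp add: sum.reindex sum_ennreal)
  also have "f None + (\<Sum>\<gamma>\<in>polymers_at u. f (Some \<gamma>)) = 1"
    by (simp add: f_def)
  finally show ?thesis
    unfolding nu using f_nonneg by (subst pmf_embed_pmf) (auto simp: f_def)
qed

lemma set_pmf_nu: "set_pmf (nu Cset w u) \<subseteq> insert None (Some ` polymers_at u)"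
  by (auto simp: set_pmf_iff pmf_nu split: option.splits if_splits)

lemma pmf_bind_nu:
  "pmf (bind_pmf (nu Cset w u) F) y =
     (1 - (\<Sum>\<gamma>\<in>polymers_at u. w \<gamma>)) * pmf (F None) y + (\<Sum>\<gamma>\<in>polymers_at u. w \<gamma> * pmf (F (Some \<gamma>)) y)"
proof -
  have "pmf (bind_pmf (nu Cset w u) F) y = (\<integral>x. pmf (F x) y \<partial>measure_pmf (nu Cset w u))"
    by (rule pmf_bind)
  also have "\<dots> = (\<Sum>x\<in>insert None (Some ` polymers_at u). pmf (nu Cset w u) x *\<^sub>R pmf (F x) y)"
    using finite_polymers_at set_pmf_nu by (intro integral_measure_pmf) auto
  finally show ?thesis
    using finite_polymers_at by (simp add: sum.reindex pmf_nu)
qed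

end

section \<open>The recursive sampler\<close>

lemma pmf_None_bind_spmf_le:
  fixes B :: real
  assumes "\<And>y. pmf (f y) None \<le> B" "0 \<le> B"
  shows "pmf (bind_spmf p f) None \<le> pmf p None + B"
proof -
  have "(\<integral>y. pmf (f y) None \<partial>measure_spmf p) \<le> (\<integral>y. B \<partial>measure_spmf p)"
  proof (rule integral_mono)
    show "integrable (measure_spmf p) (\<lambda>y. pmf (f y) None)"
      by (rule measure_spmf.integrable_const_bound[where B=1]) (auto simp: pmf_le_1)
  qed (use assms(1) in simp_all)
  also have "\<dots> = weight_spmf p * B"
    by (simp add: weight_spmf_def)
  also have "\<dots> \<le> B"
    using assms(2) weight_spmf_nonneg[of p] weight_spmf_le_1[of p] by (rule mult_left_le_one_le)
  finally show ?thesis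
    by (simp add: pmf_bind_spmf_None)
qed

lemma pmf_bind_pmf_None_only:
  assumes "\<And>x. pmf (K (Some x)) y = 0"
  shows "pmf (bind_pmf p K) y = pmf p None * pmf (K None) y"
proof -
  have "pmf (bind_pmf p K) y = (\<integral>x. pmf (K x) y \<partial>measure_pmf p)"
    by (rule pmf_bind)
  also have "\<dots> = (\<Sum>x\<in>{None}. pmf p x *\<^sub>R pmf (K x) y)"
  proof (rule integral_measure_pmf)
    show "x \<in> {None}" if "pmf (K x) y \<noteq> 0" for x
      using assms that by (cases x) auto
  qed simp
  finally show ?thesis
    by simp
qed

definition some_with_prob :: "'a \<Rightarrow> real \<Rightarrow> 'a option pmf" where
  "some_with_prob a r = map_pmf (\<lambda>b. if b then Some a else None) (bernoulli_pmf r)"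

lemma pmf_some_with_prob_Some:
  assumes "0 \<le> r" "r \<le> 1"
  shows "pmf (some_with_prob a r) (Some b) = (if b = a then r else 0)"
proof -
  have "(\<lambda>c. if c then Some a else None) -` {Some b} = (if b = a then {True} else {})"
    by (auto split: if_splits)
  then show ?thesis
    using assms by (simp add: some_with_prob_def pmf_map measure_pmf_single)
qed

lemma some_with_prob_1: "some_with_prob a 1 = return_pmf (Some a)"
proof -
  have "bernoulli_pmf 1 = return_pmf True"
    by (rule pmf_eqI) (simp split: split_indicator)
  then show ?thesis
    by (simp add: some_with_prob_def)
qed

context
  fixes V :: "'v set" and E :: "'v \<Rightarrow> 'v \<Rightarrow> bool" and Cset :: "'v polymer set"
    and w :: "'v polymer \<Rightarrow> real" and ord :: "'v set \<Rightarrow> 'v list"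
begin

text \<open>The body of \<open>ms_aux\<close> as a functional; \<open>ms_aux\<close> is its least fixed point.\<close>
definition ms_step ::
  "(('v \<times> 'v set) + ('v list \<times> 'v set \<times> 'v polymer) \<Rightarrow> 'v polymer option spmf)
   \<Rightarrow> ('v \<times> 'v set) + ('v list \<times> 'v set \<times> 'v polymer) \<Rightarrow> 'v polymer option spmf" where
  "ms_step f x = (case x of
     Inl (u, \<Lambda>) \<Rightarrow>
       (if u \<in> \<Lambda> then return_spmf None else
        bind_spmf (spmf_of_pmf (nu Cset w u)) (\<lambda>go. case go of
          None \<Rightarrow> return_spmf None
        | Some \<gamma> \<Rightarrow>
            (if fst \<gamma> \<inter> \<Lambda> \<noteq> {} then return_spmf None
             else f (Inr (u # ord (nbhd_plus V E (fst \<gamma>) - {u}), \<Lambda>, \<gamma>)))))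
   | Inr (vs, \<Lambda>, \<gamma>) \<Rightarrow>
       (case vs of
          [] \<Rightarrow> return_spmf (Some \<gamma>)
        | v # vs' \<Rightarrow>
            bind_spmf (f (Inl (v, \<Lambda>))) (\<lambda>g'. case g' of
              None \<Rightarrow> f (Inr (vs', insert v \<Lambda>, \<gamma>))
            | Some _ \<Rightarrow> return_spmf None)))"

lemma ms_aux_unfold: "ms_aux V E Cset w ord x = ms_step (ms_aux V E Cset w ord) x"
  unfolding ms_step_def by (rule ms_aux.simps)

lemma ms_step_mono:
  assumes "\<And>x. ord_spmf (=) (f x) (f' x)"
  shows "ord_spmf (=) (ms_step f x) (ms_step f' x)"
proof (cases x)
  case (Inl p)
  then show ?thesis
    unfolding ms_step_def
    by (cases p) (auto simp del: bind_spmf_of_pmf intro!: bind_spmf_mono' ord_spmf_reflI assms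
        split: option.split)
next
  case (Inr p)
  then obtain vs \<Lambda> \<gamma> where "x = Inr (vs, \<Lambda>, \<gamma>)"
    by (cases p) auto
  then show ?thesis
    unfolding ms_step_def
    by (cases vs) (auto intro!: bind_spmf_mono' ord_spmf_reflI assms split: option.split)
qed

lemma ms_aux_le_fixpoint:
  assumes fixpoint: "\<And>x. ms_step f x = f x"
  shows "ord_spmf (=) (ms_aux V E Cset w ord x) (f x)"
proof -
  have "\<forall>x. ord_spmf (=) (ms_aux V E Cset w ord x) (f x)"
  proof (induction rule: ms_aux.fixp_induct)
    case 1
    show ?case
      by (intro admissible_all admissible_leI[OF ccpo_spmf] mcont_call ccpo.mcont_const[OF ccpo_spmf])
  next
    case 2
    show ?case by simp
  next
    case (3 f')
    then have "ord_spmf (=) (ms_step f' x) (f x)" for x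
      using ms_step_mono[of f' f x] fixpoint by simp
    then show ?case
      unfolding ms_step_def by simp
  qed
  then show ?thesis by blast
qed

lemma pmf_None_ms_aux_Inr_le:
  assumes "\<And>p. pmf (ms_aux V E Cset w ord (Inl p)) None \<le> M" "0 \<le> M"
  shows "pmf (ms_aux V E Cset w ord (Inr (vs, \<Lambda>, \<gamma>))) None \<le> real (length vs) * M"
proof (induction vs arbitrary: \<Lambda>)
  case Nil
  then show ?case
    by (subst ms_aux_unfold) (simp add: ms_step_def)
next
  case (Cons v vs)
  have "pmf (ms_aux V E Cset w ord (Inr (v # vs, \<Lambda>, \<gamma>))) None
      \<le> pmf (ms_aux V E Cset w ord (Inl (v, \<Lambda>))) None + real (length vs) * M"
    using Cons.IH assms(2)
    by (subst ms_aux_unfold) (auto simp: ms_step_def intro!: pmf_None_bind_spmf_le split: option.split)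
  then show ?case
    using assms(1)[of "(v, \<Lambda>)"] by (simp add: algebra_simps)
qed

end

locale polymer_sampler = polymer_sampling V E q g Cset w \<theta>
  for V :: "'v set" and E :: "'v \<Rightarrow> 'v \<Rightarrow> bool" and q g Cset w \<theta> +
  fixes ord :: "'v set \<Rightarrow> 'v list"
  assumes ord: "\<forall>S. finite S \<longrightarrow> set (ord S) = S \<and> distinct (ord S)"
begin

abbreviation ms where "ms \<equiv> ms_aux V E Cset w ord"

lemma loop_order:
  assumes "\<gamma> \<in> polymers_at u"
  shows "set (u # ord (nbhd_plus V E (fst \<gamma>) - {u})) = nbhd_plus V E (fst \<gamma>)"
    and "length (u # ord (nbhd_plus V E (fst \<gamma>) - {u})) = card (nbhd_plus V E (fst \<gamma>))"
proof -
  have \<gamma>: "\<gamma> \<in> Cset" "u \<in> fst \<gamma>"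
    using assms by (auto simp: polymers_at_def)
  have fin: "finite (nbhd_plus V E (fst \<gamma>))"
    using finite_nbhd_plus finite_polymer \<gamma> by blast
  have u: "u \<in> nbhd_plus V E (fst \<gamma>)"
    using subset_nbhd_plus \<gamma> by blast
  show "set (u # ord (nbhd_plus V E (fst \<gamma>) - {u})) = nbhd_plus V E (fst \<gamma>)"
    using ord fin u by auto
  have "length (ord (nbhd_plus V E (fst \<gamma>) - {u})) = card (nbhd_plus V E (fst \<gamma>) - {u})"
    using ord fin by (metis distinct_card finite_Diff)
  then show "length (u # ord (nbhd_plus V E (fst \<gamma>) - {u})) = card (nbhd_plus V E (fst \<gamma>))"
    using card_Suc_Diff1[OF fin u] by simp
qed

lemma pmf_None_ms_Inl_le:
  assumes M: "\<And>p. pmf (ms (Inl p)) None \<le> M" "0 \<le> M"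
  shows "pmf (ms (Inl (u, \<Lambda>))) None \<le> M / 2"
proof (cases "u \<in> \<Lambda>")
  case True
  then show ?thesis
    using M(2) by (subst ms_aux_unfold) (simp add: ms_step_def)
next
  case False
  define K where "K = (\<lambda>go. case go of None \<Rightarrow> return_spmf None
    | Some \<gamma> \<Rightarrow> if fst \<gamma> \<inter> \<Lambda> \<noteq> {} then return_spmf None
        else ms (Inr (u # ord (nbhd_plus V E (fst \<gamma>) - {u}), \<Lambda>, \<gamma>)))"
  have ms: "ms (Inl (u, \<Lambda>)) = bind_pmf (nu Cset w u) K"
    using False by (subst ms_aux_unfold) (simp add: ms_step_def K_def)
  have K: "pmf (K (Some \<gamma>)) None \<le> (1 + real (card (nbhd_plus V E (fst \<gamma>)))) * M"
    if "\<gamma> \<in> polymers_at u" for \<gamma>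
  proof (cases "fst \<gamma> \<inter> \<Lambda> = {}")
    case True
    then have "pmf (K (Some \<gamma>)) None \<le> real (card (nbhd_plus V E (fst \<gamma>))) * M"
      using pmf_None_ms_aux_Inr_le[OF M, of "u # ord (nbhd_plus V E (fst \<gamma>) - {u})" \<Lambda> \<gamma>]
      unfolding loop_order(2)[OF that] by (simp add: K_def)
    then show ?thesis
      using M(2) by (simp add: algebra_simps)
  qed (use M(2) in \<open>simp add: K_def\<close>)
  have "pmf (ms (Inl (u, \<Lambda>))) None = (\<Sum>\<gamma>\<in>polymers_at u. w \<gamma> * pmf (K (Some \<gamma>)) None)"
    by (simp add: ms pmf_bind_nu K_def)
  also have "\<dots> \<le> (\<Sum>\<gamma>\<in>polymers_at u. w \<gamma> * ((1 + real (card (nbhd_plus V E (fst \<gamma>)))) * M))"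
    using K w_nonneg by (intro sum_mono mult_left_mono) (auto simp: polymers_at_def)
  also have "\<dots> = (\<Sum>\<gamma>\<in>polymers_at u. w \<gamma> * (1 + real (card (nbhd_plus V E (fst \<gamma>))))) * M"
    by (simp add: sum_distrib_right mult.assoc)
  also have "\<dots> \<le> 1/2 * M"
    using sum_polymers_at_weight_nbhd_plus_le M(2) by (rule mult_right_mono)
  finally show ?thesis
    by simp
qed

lemma lossless_ms_Inl: "lossless_spmf (ms (Inl p))"
proof -
  define M where "M = (SUP p. pmf (ms (Inl p)) None)"
  have "bdd_above (range (\<lambda>p. pmf (ms (Inl p)) None))"
    by (intro bdd_aboveI[of _ 1]) (auto simp: pmf_le_1)
  then have le_M: "pmf (ms (Inl p)) None \<le> M" for p
    unfolding M_def by (intro cSUP_upper) auto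
  have M_nonneg: "0 \<le> M"
    using le_M[of p] pmf_nonneg[of "ms (Inl p)" None] by linarith
  have "(SUP p. pmf (ms (Inl p)) None) \<le> M / 2"
    using pmf_None_ms_Inl_le[OF le_M M_nonneg] by (intro cSUP_least) auto
  then have "M \<le> 0"
    unfolding M_def[symmetric] by simp
  then have "pmf (ms (Inl p)) None = 0"
    using le_M[of p] pmf_nonneg[of "ms (Inl p)" None] by linarith
  then show ?thesis
    by (simp add: lossless_iff_pmf_None)
qed

text \<open>A pending loop over vs keeps \<gamma> exactly when all its calls return \<emptyset>, which happens with
  probability \<open>Z (\<Lambda> \<union> set vs) / Z \<Lambda>\<close> because the successive ratios telescope.\<close>
definition target_law ::
  "('v \<times> 'v set) + ('v list \<times> 'v set \<times> 'v polymer) \<Rightarrow> 'v polymer option spmf" where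
  "target_law x = (case x of
     Inl (u, \<Lambda>) \<Rightarrow> spmf_of_pmf (map_pmf (\<lambda>\<Gamma>. poly_at \<Gamma> u) (mu_avoiding \<Lambda>))
   | Inr (vs, \<Lambda>, \<gamma>) \<Rightarrow> spmf_of_pmf (some_with_prob \<gamma> (Z (\<Lambda> \<union> set vs) / Z \<Lambda>)))"

lemma ms_step_target_law_Inl:
  "ms_step V E Cset w ord target_law (Inl (u, \<Lambda>)) = target_law (Inl (u, \<Lambda>))"
proof (cases "u \<in> \<Lambda>")
  case True
  have "map_pmf (\<lambda>\<Gamma>. poly_at \<Gamma> u) (mu_avoiding \<Lambda>) = return_pmf None"
    using True by (intro spmf_eqI) (auto simp: pmf_poly_at_Some)
  then show ?thesis
    using True by (simp add: ms_step_def target_law_def)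
next
  case False
  define K where "K = (\<lambda>go. case go of None \<Rightarrow> return_pmf None
    | Some (\<gamma> :: 'v polymer) \<Rightarrow> if fst \<gamma> \<inter> \<Lambda> \<noteq> {} then return_pmf None
        else some_with_prob \<gamma> (Z (\<Lambda> \<union> set (u # ord (nbhd_plus V E (fst \<gamma>) - {u}))) / Z \<Lambda>))"
  have step: "ms_step V E Cset w ord target_law (Inl (u, \<Lambda>)) = spmf_of_pmf (bind_pmf (nu Cset w u) K)"
    using False unfolding spmf_of_pmf_bind
    by (auto simp: ms_step_def target_law_def K_def intro!: bind_pmf_cong split: option.split)
  define T where "T \<delta> = (if fst \<delta> \<inter> \<Lambda> = {} then w \<delta> * Z (\<Lambda> \<union> nbhd_plus V E (fst \<delta>)) / Z \<Lambda> else 0)"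
    for \<delta>
  have K: "w \<gamma> * pmf (K (Some \<gamma>)) (Some \<delta>) = (if \<gamma> = \<delta> then T \<delta> else 0)"
    if "\<gamma> \<in> polymers_at u" for \<gamma> \<delta>
  proof -
    have "K (Some \<gamma>) = (if fst \<gamma> \<inter> \<Lambda> \<noteq> {} then return_pmf None
        else some_with_prob \<gamma> (Z (\<Lambda> \<union> nbhd_plus V E (fst \<gamma>)) / Z \<Lambda>))"
      by (simp only: K_def option.case loop_order(1)[OF that])
    then show ?thesis
      using Z_ratio_nonneg Z_ratio_le_1 by (auto simp: T_def pmf_some_with_prob_Some)
  qed
  have "bind_pmf (nu Cset w u) K = map_pmf (\<lambda>\<Gamma>. poly_at \<Gamma> u) (mu_avoiding \<Lambda>)"
  proof (rule spmf_eqI)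
    fix \<delta>
    have "spmf (bind_pmf (nu Cset w u) K) \<delta> = (\<Sum>\<gamma>\<in>polymers_at u. w \<gamma> * pmf (K (Some \<gamma>)) (Some \<delta>))"
      by (simp add: pmf_bind_nu K_def)
    also have "\<dots> = (\<Sum>\<gamma>\<in>polymers_at u. if \<gamma> = \<delta> then T \<delta> else 0)"
      using K by (intro sum.cong) auto
    also have "\<dots> = spmf (map_pmf (\<lambda>\<Gamma>. poly_at \<Gamma> u) (mu_avoiding \<Lambda>)) \<delta>"
      using finite_polymers_at by (auto simp: pmf_poly_at_Some T_def polymers_at_def)
    finally show "spmf (bind_pmf (nu Cset w u) K) \<delta> = spmf (map_pmf (\<lambda>\<Gamma>. poly_at \<Gamma> u) (mu_avoiding \<Lambda>)) \<delta>" .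
  qed
  then show ?thesis
    by (simp add: step target_law_def)
qed

lemma ms_step_target_law_Inr:
  "ms_step V E Cset w ord target_law (Inr (vs, \<Lambda>, \<gamma>)) = target_law (Inr (vs, \<Lambda>, \<gamma>))"
proof (cases vs)
  case Nil
  then show ?thesis
    using Z_pos[of \<Lambda>] by (simp add: ms_step_def target_law_def some_with_prob_1)
next
  case (Cons v vs')
  define r where "r = Z (insert v \<Lambda> \<union> set vs') / Z (insert v \<Lambda>)"
  define K where "K = (\<lambda>go. case go of None \<Rightarrow> some_with_prob \<gamma> r | Some (_ :: 'v polymer) \<Rightarrow> return_pmf None)"
  have step: "ms_step V E Cset w ord target_law (Inr (vs, \<Lambda>, \<gamma>)) =
      spmf_of_pmf (bind_pmf (map_pmf (\<lambda>\<Gamma>. poly_at \<Gamma> v) (mu_avoiding \<Lambda>)) K)"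
    unfolding Cons spmf_of_pmf_bind
    by (auto simp: ms_step_def target_law_def K_def r_def intro!: bind_pmf_cong split: option.split)
  have "bind_pmf (map_pmf (\<lambda>\<Gamma>. poly_at \<Gamma> v) (mu_avoiding \<Lambda>)) K = some_with_prob \<gamma> (Z (\<Lambda> \<union> set vs) / Z \<Lambda>)"
  proof (rule spmf_eqI)
    fix \<delta>
    have "Z (insert v \<Lambda>) / Z \<Lambda> * r = Z (\<Lambda> \<union> set vs) / Z \<Lambda>"
      using Z_pos[of "insert v \<Lambda>"] Cons by (simp add: r_def)
    moreover have "0 \<le> r" "r \<le> 1"
      unfolding r_def by (rule Z_ratio_nonneg, rule Z_ratio_le_1)
    ultimately show "spmf (bind_pmf (map_pmf (\<lambda>\<Gamma>. poly_at \<Gamma> v) (mu_avoiding \<Lambda>)) K) \<delta> =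
        spmf (some_with_prob \<gamma> (Z (\<Lambda> \<union> set vs) / Z \<Lambda>)) \<delta>"
      using Z_ratio_nonneg Z_ratio_le_1
      by (simp add: pmf_bind_pmf_None_only K_def pmf_poly_at_None pmf_some_with_prob_Some)
  qed
  then show ?thesis
    by (simp add: step target_law_def)
qed

lemma target_law_fixpoint: "ms_step V E Cset w ord target_law x = target_law x"
  using ms_step_target_law_Inl ms_step_target_law_Inr by (cases x) auto

lemma ms_Inl_eq_target_law: "ms (Inl p) = target_law (Inl p)"
  \<comment> \<open>the chain premise of the library lemma is irrelevant to its conclusion\<close>
proof (rule ord_spmf_eq_pmf_None_eq[OF Complete_Partial_Order.chain_empty])
  show "ord_spmf (=) (ms (Inl p)) (target_law (Inl p))"
    using target_law_fixpoint by (rule ms_aux_le_fixpoint)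
  show "pmf (ms (Inl p)) None = pmf (target_law (Inl p)) None"
    using lossless_ms_Inl[of p] by (auto simp: lossless_iff_pmf_None target_law_def split: prod.split)
qed

lemma lossless_ms_polymer: "lossless_spmf (ms_polymer V E Cset w ord u \<Lambda>)"
  by (simp add: ms_polymer_def lossless_ms_Inl)

lemma spmf_ms_polymer:
  "spmf (ms_polymer V E Cset w ord u \<Lambda>) go = mu_cond_prob E Cset w {\<Gamma>. poly_at \<Gamma> u = go} {\<Gamma>. avoids \<Gamma> \<Lambda>}"
  by (simp add: ms_polymer_def ms_Inl_eq_target_law target_law_def pmf_map vimage_def
      measure_mu_avoiding_eq_mu_cond_prob)

end

lemma sampling_condition_exp_bound:
  fixes a d C \<theta> :: real
  assumes a: "1 \<le> a" and d: "1 \<le> d" and C: "10 \<le> C" and \<theta>: "C * (1 + ln (a * d)) \<le> \<theta>"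
  shows "32 * a * d^2 \<le> exp \<theta>"
proof -
  define x where "x = a * d"
  have x: "1 \<le> x"
    using mult_mono[OF a d] a by (simp add: x_def)
  have "32 * a * d^2 \<le> 32 * x^2"
    using a d mult_right_mono[of a "a * a" "d^2"] by (simp add: x_def power2_eq_square algebra_simps)
  also have "\<dots> \<le> 32 * x^10"
    using x by (intro mult_left_mono power_increasing) auto
  also have "\<dots> \<le> exp 10 * x^10"
  proof -
    have "(32::real) \<le> exp 5 * exp 5"
      using exp_ge_add_one_self[of 5] mult_mono[of 6 "exp 5" 6 "exp (5::real)"] by simp
    then show ?thesis
      by (intro mult_right_mono) (auto simp flip: exp_add)
  qed
  also have "\<dots> = exp (10 * (1 + ln x))"
    using x by (simp add: exp_add distrib_left exp_of_nat_mult[of 10, simplified])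
  also have "\<dots> \<le> exp \<theta>"
    using x C \<theta> mult_right_mono[OF C, of "1 + ln x"] by (simp add: x_def)
  finally show ?thesis .
qed

theorem lemma4p11:
  fixes V :: "'v set" and E :: "'v \<Rightarrow> 'v \<Rightarrow> bool" and q :: nat and g :: "'v \<Rightarrow> nat"
    and Cset :: "'v polymer set" and w :: "'v polymer \<Rightarrow> real" and C :: real
    and \<Delta> :: nat and ord :: "'v set \<Rightarrow> 'v list" and u :: 'v and \<Lambda> :: "'v set"
  assumes graph: "simple_graph V E"
    and Delta: "\<Delta> = max_degree V E" and Delta_pos: "\<Delta> \<ge> 1"
    and q: "q \<ge> 2"
    and g: "\<forall>v\<in>V. g v \<in> {1..q}"
    and Cset: "\<forall>\<gamma>\<in>Cset. is_polymer V E q g \<gamma>"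
    and w_nonneg: "\<forall>\<gamma>\<in>Cset. w \<gamma> \<ge> 0"
    and C: "C \<ge> 10"
    and psc: "polymer_sampling_condition C q \<Delta> Cset w"
    and ord: "\<forall>S. finite S \<longrightarrow> set (ord S) = S \<and> distinct (ord S)"
    and u: "u \<in> V" and Lambda: "\<Lambda> \<subseteq> V"
  shows "lossless_spmf (ms_polymer V E Cset w ord u \<Lambda>) \<and>
    (\<forall>go. (go = None \<or> (\<exists>\<gamma>. go = Some \<gamma> \<and> \<gamma> \<in> Cset \<and> u \<in> fst \<gamma>)) \<longrightarrow>
       spmf (ms_polymer V E Cset w ord u \<Lambda>) go =
       mu_cond_prob E Cset w {\<Gamma>. poly_at \<Gamma> u = go} {\<Gamma>. avoids \<Gamma> \<Lambda>})"
proof -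
  obtain \<theta> where \<theta>: "C * (1 + ln (real (q - 1) * real \<Delta>)) \<le> \<theta>"
    and w_le: "\<forall>\<gamma>\<in>Cset. w \<gamma> \<le> exp (- \<theta> * real (card (fst \<gamma>)))"
    using psc unfolding polymer_sampling_condition_def by blast
  have "32 * real (q - 1) * real \<Delta> ^ 2 \<le> exp \<theta>"
    using q Delta_pos C \<theta> by (intro sampling_condition_exp_bound) auto
  then interpret polymer_sampler V E q g Cset w \<theta> ord
    using graph Delta Delta_pos q g Cset w_nonneg w_le ord
    by unfold_locales auto
  show ?thesis
    using lossless_ms_polymer spmf_ms_polymer by blast
qed

end
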